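(* For every integer $k \ge 4$ there exist positive constants $c_k$ and $d_k$ such that for every positive integer $n$, \[ c_k\cdot 2^{n/(k-1)} \le f(n,k) \le d_k \cdot 2^{n/\lceil k/2\rceil}. \]
   Context: A family $\mathcal{F}$ of subsets of $[n]=\{1,\ldots,n\}$ is $k$-wise intersecting if every collection of at most $k$ members of $\mathcal{F}$ has a common element; it is maximal $k$-wise intersecting if moreover no subset of $[n]$ outside $\mathcal{F}$ can be added while preserving this property. $f(n,k)$ denotes the smallest possible size of a maximal $k$-wise intersecting family of subsets of $[n]$. *)

theory Defs
  imports Complex_Main
begin

definition kwise_intersecting :: "nat \<Rightarrow> nat \<Rightarrow> nat set set \<Rightarrow> bool" where
  "kwise_intersecting n k F \<longleftrightarrow>
     F \<subseteq> Pow {1..n} \<and>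
     (\<forall>G. G \<subseteq> F \<longrightarrow> G \<noteq> {} \<longrightarrow> card G \<le> k \<longrightarrow> \<Inter>G \<noteq> {})"

definition maximal_kwise_intersecting :: "nat \<Rightarrow> nat \<Rightarrow> nat set set \<Rightarrow> bool" where
  "maximal_kwise_intersecting n k F \<longleftrightarrow>
     kwise_intersecting n k F \<and>
     (\<forall>A. A \<subseteq> {1..n} \<longrightarrow> A \<notin> F \<longrightarrow> \<not> kwise_intersecting n k (insert A F))"

definition f :: "nat \<Rightarrow> nat \<Rightarrow> nat" where
  "f n k = Inf {card F | F. maximal_kwise_intersecting n k F}"

end

theory Submission
  imports Defs "HOL-Library.FuncSet"
begin

text \<open>Lower bound: if A is not in a maximal k-wise intersecting family F on [n], adding A
  creates at most k members without a common point, so A is covered by the complements of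
  k - 1 members of F; hence 2^n \<le> |F| + |F|^(k-1).
  Upper bound: split [n] into t = \<lceil>k/2\<rceil> blocks of size about n/t, plus one extra
  point S when k is even, and take the complements of the proper subsets of the blocks and of
  the subsets of S. A cover of [n] by such sets needs two of them per block and one for S,
  i.e. k + 1 sets, so the family is k-wise intersecting; a short case analysis shows that it is
  maximal, and it has about t 2^(n/t) members.\<close>

section \<open>Maximal k-wise intersecting families\<close>

lemma kwise_intersectingD:
  "kwise_intersecting n k F \<Longrightarrow> G \<subseteq> F \<Longrightarrow> G \<noteq> {} \<Longrightarrow> card G \<le> k \<Longrightarrow> \<Inter>G \<noteq> {}"
  unfolding kwise_intersecting_def by blast

lemma not_kwise_intersectingE:
  assumes "\<not> kwise_intersecting n k F" "F \<subseteq> Pow {1..n}"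
  obtains G where "G \<subseteq> F" "G \<noteq> {}" "card G \<le> k" "\<Inter>G = {}"
  using assms unfolding kwise_intersecting_def by blast

lemma maximal_kwise_intersecting_subset_Pow:
  "maximal_kwise_intersecting n k F \<Longrightarrow> F \<subseteq> Pow {1..n}"
  unfolding maximal_kwise_intersecting_def kwise_intersecting_def by blast

lemma maximal_kwise_intersecting_finite:
  assumes "maximal_kwise_intersecting n k F" shows "finite F"
  using maximal_kwise_intersecting_subset_Pow[OF assms] by (rule finite_subset) simp

lemma maximal_kwise_intersecting_kwise:
  "maximal_kwise_intersecting n k F \<Longrightarrow> kwise_intersecting n k F"
  unfolding maximal_kwise_intersecting_def by (rule conjunct1)

lemma maximal_kwise_intersecting_not_kwise_insert:
  "maximal_kwise_intersecting n k F \<Longrightarrow> A \<subseteq> {1..n} \<Longrightarrow> A \<notin> F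
    \<Longrightarrow> \<not> kwise_intersecting n k (insert A F)"
  unfolding maximal_kwise_intersecting_def by blast

lemma maximal_kwise_intersecting_upward_closed:
  assumes max: "maximal_kwise_intersecting n k F"
    and "B \<in> F" "B \<subseteq> C" "C \<subseteq> {1..n}"
  shows "C \<in> F"
proof (rule ccontr)
  assume "C \<notin> F"
  have kwise: "kwise_intersecting n k F" and F_Pow: "F \<subseteq> Pow {1..n}"
    using max maximal_kwise_intersecting_kwise maximal_kwise_intersecting_subset_Pow by blast+
  have "kwise_intersecting n k (insert C F)"
    unfolding kwise_intersecting_def
  proof (intro conjI allI impI)
    show "insert C F \<subseteq> Pow {1..n}" using F_Pow \<open>C \<subseteq> {1..n}\<close> by auto
  next
    fix G assume G: "G \<subseteq> insert C F" "G \<noteq> {}" "card G \<le> k"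
    show "\<Inter>G \<noteq> {}"
    proof (cases "C \<in> G")
      case False
      then have "G \<subseteq> F" using G(1) by blast
      then show ?thesis using kwise_intersectingD[OF kwise _ G(2,3)] by simp
    next
      case True
      \<comment> \<open>replacing C by the smaller member B only shrinks the intersection\<close>
      define G' where "G' = insert B (G - {C})"
      have "finite G"
        using G(1) by (rule finite_subset) (simp add: maximal_kwise_intersecting_finite[OF max])
      have "card G' \<le> Suc (card (G - {C}))"
        using \<open>finite G\<close> by (simp add: G'_def card_insert_if)
      also have "\<dots> = card G" using \<open>finite G\<close> True by (rule card_Suc_Diff1)
      finally have "card G' \<le> card G" .
      moreover have "G' \<subseteq> F" using G \<open>B \<in> F\<close> by (auto simp: G'_def)
      moreover have "G' \<noteq> {}" by (simp add: G'_def)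
      ultimately have "\<Inter>G' \<noteq> {}"
        using kwise_intersectingD[OF kwise] G(3) by simp
      moreover have "\<Inter>G' \<subseteq> \<Inter>G" using True \<open>B \<subseteq> C\<close> by (auto simp: G'_def)
      ultimately show ?thesis by auto
    qed
  qed
  with maximal_kwise_intersecting_not_kwise_insert[OF max \<open>C \<subseteq> {1..n}\<close> \<open>C \<notin> F\<close>]
  show False by contradiction
qed

lemma maximal_kwise_intersecting_top:
  assumes max: "maximal_kwise_intersecting n k F" and "n \<ge> 1"
  shows "{1..n} \<in> F"
proof (cases "F = {}")
  case True
  then have "kwise_intersecting n k (insert {1..n} F)"
    using \<open>n \<ge> 1\<close> by (auto simp: kwise_intersecting_def subset_singleton_iff)
  then show ?thesis using maximal_kwise_intersecting_not_kwise_insert[OF max order_refl] by blast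
next
  case False
  then obtain B where "B \<in> F" by blast
  moreover from this have "B \<subseteq> {1..n}" using maximal_kwise_intersecting_subset_Pow[OF max] by blast
  ultimately show ?thesis using maximal_kwise_intersecting_upward_closed[OF max] by blast
qed

lemma maximal_kwise_intersecting_star:
  assumes "n \<ge> 1" "k \<ge> 2"
  shows "maximal_kwise_intersecting n k {A. A \<subseteq> {1..n} \<and> 1 \<in> A}"
  unfolding maximal_kwise_intersecting_def
proof (intro conjI allI impI)
  show "kwise_intersecting n k {A. A \<subseteq> {1..n} \<and> 1 \<in> A}"
    unfolding kwise_intersecting_def by auto
  fix A assume A: "A \<subseteq> {1..n}" "A \<notin> {A. A \<subseteq> {1..n} \<and> 1 \<in> A}"
  have sub: "{A, {1}} \<subseteq> insert A {A. A \<subseteq> {1..n} \<and> 1 \<in> A}" using \<open>n \<ge> 1\<close> by auto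
  have card: "card {A, {1}} \<le> k" using \<open>k \<ge> 2\<close> by (simp add: card_insert_if)
  have "\<Inter>{A, {1}} = {}" using A by auto
  then show "\<not> kwise_intersecting n k (insert A {A. A \<subseteq> {1..n} \<and> 1 \<in> A})"
    using kwise_intersectingD[OF _ sub _ card] by blast
qed

lemma f_le_card:
  assumes "maximal_kwise_intersecting n k F" shows "f n k \<le> card F"
  unfolding f_def by (rule cInf_lower) (use assms in auto)

lemma f_attained:
  assumes "n \<ge> 1" "k \<ge> 2"
  obtains F where "maximal_kwise_intersecting n k F" "f n k = card F"
proof -
  have "{card F | F. maximal_kwise_intersecting n k F} \<noteq> {}"
    using maximal_kwise_intersecting_star[OF assms] by blast
  from Inf_nat_def1[OF this] show ?thesis using that unfolding f_def by auto
qed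

lemma f_le_two_power:
  assumes "n \<ge> 1" "k \<ge> 2" shows "f n k \<le> 2 ^ n"
proof -
  have "f n k \<le> card {A. A \<subseteq> {1..n} \<and> 1 \<in> A}"
    by (rule f_le_card[OF maximal_kwise_intersecting_star[OF assms]])
  also have "\<dots> \<le> card (Pow {1..n})" by (rule card_mono) auto
  finally show ?thesis by (simp add: card_Pow)
qed

section \<open>The lower bound\<close>

lemma ex_image_lessThan_eq:
  assumes "finite S" "S \<noteq> {}" "card S \<le> m"
  shows "\<exists>h. h ` {..<m} = S"
proof -
  obtain b where b: "bij_betw b {..<card S} S"
    using ex_bij_betw_nat_finite[OF assms(1)] by (auto simp: atLeast0LessThan)
  have "card S > 0" using assms(1,2) by (simp add: card_gt_0_iff)
  define h where "h i = b (if i < card S then i else 0)" for i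
  have "h ` {..<m} = b ` {..<card S}"
  proof
    show "h ` {..<m} \<subseteq> b ` {..<card S}" using \<open>card S > 0\<close> by (auto simp: h_def)
    show "b ` {..<card S} \<subseteq> h ` {..<m}"
    proof
      fix x assume "x \<in> b ` {..<card S}"
      then obtain i where "i < card S" "x = b i" by blast
      then have "x = h i" "i < m" using assms(3) by (simp_all add: h_def)
      then show "x \<in> h ` {..<m}" by blast
    qed
  qed
  also have "\<dots> = S" using b by (rule bij_betw_imp_surj_on)
  finally show ?thesis by blast
qed

text \<open>Adding A creates at most k members without a common point. The members other than
  A, enlarged by the complement of A (upward closure) and listed with repetitions, give k - 1
  members of F whose complements cover A.\<close>
lemma maximal_kwise_intersecting_nonmember:
  assumes max: "maximal_kwise_intersecting n k F" and "n \<ge> 1" "k \<ge> 2"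
    and A: "A \<subseteq> {1..n}" "A \<notin> F"
  shows "A \<in> (\<lambda>g. \<Union>i<k-1. {1..n} - g i) ` ({..<k-1} \<rightarrow>\<^sub>E F)"
proof -
  let ?U = "{1..n}"
  have F_Pow: "F \<subseteq> Pow ?U" by (rule maximal_kwise_intersecting_subset_Pow[OF max])
  have "\<not> kwise_intersecting n k (insert A F)"
    by (rule maximal_kwise_intersecting_not_kwise_insert[OF max A])
  moreover have "insert A F \<subseteq> Pow ?U" using F_Pow A(1) by blast
  ultimately obtain G where G: "G \<subseteq> insert A F" "G \<noteq> {}" "card G \<le> k" "\<Inter>G = {}"
    by (rule not_kwise_intersectingE)
  have "finite G"
    using G(1) by (rule finite_subset) (simp add: maximal_kwise_intersecting_finite[OF max])
  have "A \<in> G"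
  proof (rule ccontr)
    assume "A \<notin> G"
    then have "G \<subseteq> F" using G(1) by blast
    from kwise_intersectingD[OF maximal_kwise_intersecting_kwise[OF max] this G(2,3)] G(4)
    show False by contradiction
  qed
  define G' where "G' = G - {A}"
  have G'_F: "G' \<subseteq> F" and card_G': "card G' \<le> k - 1" and A_G': "A \<inter> \<Inter>G' = {}"
    using G \<open>A \<in> G\<close> \<open>finite G\<close> by (auto simp: G'_def)
  show ?thesis
  proof (cases "G' = {}")
    case True
    then have "A = {}" using A_G' by simp
    have "A = (\<Union>i<k-1. ?U - (\<lambda>i\<in>{..<k-1}. ?U) i)" using \<open>A = {}\<close> by simp
    moreover have "(\<lambda>i\<in>{..<k-1}. ?U) \<in> {..<k-1} \<rightarrow>\<^sub>E F"
      using maximal_kwise_intersecting_top[OF max \<open>n \<ge> 1\<close>] by simp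
    ultimately show ?thesis by (rule image_eqI)
  next
    case False
    have "finite G'" using \<open>finite G\<close> by (simp add: G'_def)
    then obtain h where h: "h ` {..<k-1} = G'"
      using ex_image_lessThan_eq[OF _ False card_G'] by blast
    define g where "g = (\<lambda>i\<in>{..<k-1}. (?U - A) \<union> h i)"
    have "g \<in> {..<k-1} \<rightarrow>\<^sub>E F"
    proof (rule PiE_I)
      fix i assume "i \<in> {..<k-1}"
      then have "h i \<in> F" using h G'_F by blast
      moreover have "(?U - A) \<union> h i \<subseteq> ?U" using \<open>h i \<in> F\<close> F_Pow by blast
      ultimately show "g i \<in> F"
        using maximal_kwise_intersecting_upward_closed[OF max] \<open>i \<in> {..<k-1}\<close>
        by (simp add: g_def)
    qed (simp add: g_def)
    moreover have "A = (\<Union>i<k-1. ?U - g i)"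
      using A(1) A_G' h by (auto simp: g_def)
    ultimately show ?thesis by blast
  qed
qed

lemma maximal_kwise_intersecting_card_bound:
  assumes max: "maximal_kwise_intersecting n k F" and "n \<ge> 1" "k \<ge> 2"
  shows "2 ^ n \<le> card F + card F ^ (k - 1)"
proof -
  have "finite F" by (rule maximal_kwise_intersecting_finite[OF max])
  let ?I = "(\<lambda>g. \<Union>i<k-1. {1..n} - g i) ` ({..<k-1} \<rightarrow>\<^sub>E F)"
  have "Pow {1..n} \<subseteq> F \<union> ?I"
  proof
    fix A assume "A \<in> Pow {1..n}"
    then show "A \<in> F \<union> ?I"
      using maximal_kwise_intersecting_nonmember[OF assms, of A] by blast
  qed
  then have "card (Pow {1..n}) \<le> card (F \<union> ?I)"
    by (rule card_mono[rotated]) (simp add: \<open>finite F\<close> finite_PiE)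
  also have "\<dots> \<le> card F + card ?I" by (rule card_Un_le)
  also have "card ?I \<le> card ({..<k-1} \<rightarrow>\<^sub>E F)"
    by (rule card_image_le) (simp add: \<open>finite F\<close> finite_PiE)
  also have "card ({..<k-1} \<rightarrow>\<^sub>E F) = card F ^ (k - 1)" by (simp add: card_PiE)
  finally show ?thesis by (simp add: card_Pow)
qed

lemma half_powr_le_of_power_le:
  fixes m :: real
  assumes "m \<ge> 0" "j \<ge> 1" "2 ^ n \<le> 2 * m ^ j"
  shows "1/2 * 2 powr (real n / real j) \<le> m"
proof -
  have "(2 powr (real n / real j)) ^ j = (2::real) powr (real j * (real n / real j))"
    by (rule powr_power) simp
  also have "real j * (real n / real j) = real n" using \<open>j \<ge> 1\<close> by simp
  also have "(2::real) powr real n = 2 ^ n" by (rule powr_realpow) simp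
  finally have "(1/2 * 2 powr (real n / real j)) ^ j = (1/2) ^ j * 2 ^ n"
    by (simp only: power_mult_distrib)
  also have "\<dots> \<le> (1/2) ^ 1 * 2 ^ n"
    using \<open>j \<ge> 1\<close> by (intro mult_right_mono power_decreasing) simp_all
  also have "\<dots> \<le> m ^ j" using assms(3) by simp
  finally have "(1/2 * 2 powr (real n / real j)) ^ j \<le> m ^ j" .
  then show ?thesis using assms(1,2) by simp
qed

lemma f_lower_bound:
  assumes "n \<ge> 1" "k \<ge> 2"
  shows "1/2 * 2 powr (real n / (real k - 1)) \<le> real (f n k)"
proof -
  obtain F where max: "maximal_kwise_intersecting n k F" and "f n k = card F"
    using f_attained[OF assms] .
  have "card F \<ge> 1"
    using maximal_kwise_intersecting_top[OF max \<open>n \<ge> 1\<close>]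
      maximal_kwise_intersecting_finite[OF max] by (auto simp: Suc_le_eq card_gt_0_iff)
  then have "card F \<le> card F ^ (k - 1)" using \<open>k \<ge> 2\<close> by (simp add: self_le_power)
  with maximal_kwise_intersecting_card_bound[OF max assms]
  have "2 ^ n \<le> 2 * card F ^ (k - 1)" by linarith
  then have "real (2 ^ n) \<le> real (2 * card F ^ (k - 1))" by (simp only: of_nat_le_iff)
  then have "2 ^ n \<le> 2 * real (card F) ^ (k - 1)" by simp
  then have "1/2 * 2 powr (real n / real (k - 1)) \<le> real (card F)"
    by (rule half_powr_le_of_power_le[rotated 2]) (use \<open>k \<ge> 2\<close> in simp_all)
  moreover have "real (k - 1) = real k - 1" using \<open>k \<ge> 2\<close> by simp
  ultimately show ?thesis using \<open>f n k = card F\<close> by simp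
qed

section \<open>The block construction\<close>

lemma sum_le_sum_subset_plus_bound:
  fixes b :: "'a \<Rightarrow> nat"
  assumes "finite I" "J \<subseteq> I" "\<And>i. i \<in> I - J \<Longrightarrow> b i \<le> c"
  shows "sum b I \<le> sum b J + c * (card I - card J)"
proof -
  have "sum b I = sum b J + sum b (I - J)"
    using assms(1,2) by (simp add: sum.subset_diff)
  also have "sum b (I - J) \<le> c * card (I - J)"
    using sum_bounded_above[of "I - J" b c] assms(3) by (simp add: mult.commute)
  also have "card (I - J) = card I - card J"
    using finite_subset[OF assms(2,1)] assms(2) by (rule card_Diff_subset)
  finally show ?thesis by simp
qed

locale block_partition =
  fixes n t :: nat and X :: "nat \<Rightarrow> nat set" and S :: "nat set"
  assumes block_subset: "i < t \<Longrightarrow> X i \<subseteq> {1..n}"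
    and two_le_card_block: "i < t \<Longrightarrow> 2 \<le> card (X i)"
    and blocks_disjoint: "i < t \<Longrightarrow> j < t \<Longrightarrow> i \<noteq> j \<Longrightarrow> X i \<inter> X j = {}"
    and S_subset: "S \<subseteq> {1..n}"
    and card_S_le_1: "card S \<le> 1"
    and S_disjoint_block: "i < t \<Longrightarrow> S \<inter> X i = {}"
    and covers: "{1..n} \<subseteq> S \<union> (\<Union>i<t. X i)"
begin

definition small_sets :: "nat set set" where
  "small_sets = {Y. \<exists>i<t. Y \<subset> X i} \<union> Pow S"

definition family :: "nat set set" where
  "family = (\<lambda>Y. {1..n} - Y) ` small_sets"

lemma finite_block: assumes "i < t" shows "finite (X i)"
  using block_subset[OF assms] by (rule finite_subset) simp

lemma finite_S: "finite S"
  using S_subset by (rule finite_subset) simp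

lemma small_sets_subset_Pow: "small_sets \<subseteq> Pow {1..n}"
  using block_subset S_subset by (auto simp: small_sets_def)

lemma finite_small_sets: "finite small_sets"
  using small_sets_subset_Pow by (rule finite_subset) simp

lemma small_set_meeting_block:
  assumes "Y \<in> small_sets" "i < t" "Y \<inter> X i \<noteq> {}"
  shows "Y \<subset> X i"
proof -
  consider j where "j < t" "Y \<subset> X j" | "Y \<subseteq> S"
    using assms(1) by (auto simp: small_sets_def)
  then show ?thesis
  proof cases
    case (1 j)
    with assms(2,3) blocks_disjoint[of i j] show ?thesis by (cases "i = j") auto
  next
    case 2
    with assms(2,3) S_disjoint_block[of i] show ?thesis by auto
  qed
qed

lemma small_set_meets_one_block:
  assumes "Y \<in> small_sets" "i < t" "j < t" "Y \<inter> X i \<noteq> {}" "Y \<inter> X j \<noteq> {}"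
  shows "i = j"
  using small_set_meeting_block[OF assms(1,2,4)] blocks_disjoint[OF assms(2,3)] assms(5) by blast

lemma small_set_meeting_block_disjoint_S:
  assumes "Y \<in> small_sets" "i < t" "Y \<inter> X i \<noteq> {}"
  shows "Y \<inter> S = {}"
  using small_set_meeting_block[OF assms] S_disjoint_block[OF assms(2)] by blast

lemma two_le_card_cover_block:
  assumes D: "D \<subseteq> small_sets" and cover: "X i \<subseteq> \<Union>D" and "i < t"
  shows "2 \<le> card {Y \<in> D. Y \<inter> X i \<noteq> {}}" (is "_ \<le> card ?P")
proof (rule ccontr)
  assume "\<not> 2 \<le> card ?P"
  then have "card ?P \<le> Suc 0" by simp
  moreover have "finite ?P"
    using finite_subset[OF D finite_small_sets] by simp
  ultimately have single: "Y = Y'" if "Y \<in> ?P" "Y' \<in> ?P" for Y Y'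
    using that card_le_Suc0_iff_eq by blast
  have "X i \<noteq> {}" using two_le_card_block[OF \<open>i < t\<close>] by auto
  then obtain x where "x \<in> X i" by blast
  then obtain Y where Y: "Y \<in> ?P" "x \<in> Y" using cover by blast
  have "X i \<subseteq> Y"
  proof
    fix x' assume "x' \<in> X i"
    then obtain Y' where "Y' \<in> D" "x' \<in> Y'" using cover by blast
    with \<open>x' \<in> X i\<close> have "Y' \<in> ?P" by blast
    with single[OF Y(1)] \<open>x' \<in> Y'\<close> show "x' \<in> Y" by simp
  qed
  moreover have "Y \<subset> X i"
    using Y(1) D \<open>i < t\<close> small_set_meeting_block by blast
  ultimately show False by blast
qed

lemma card_S_le_card_cover_S:
  assumes D: "D \<subseteq> small_sets" and cover: "S \<subseteq> \<Union>D"
  shows "card S \<le> card {Y \<in> D. Y \<inter> S \<noteq> {}}" (is "_ \<le> card ?P")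
proof (cases "S = {}")
  case False
  then obtain s Y where "s \<in> S" "Y \<in> D" "s \<in> Y" using cover by blast
  then have "?P \<noteq> {}" by blast
  moreover have "finite ?P"
    using finite_subset[OF D finite_small_sets] by simp
  ultimately have "1 \<le> card ?P" by (simp add: Suc_le_eq card_gt_0_iff)
  with card_S_le_1 show ?thesis by linarith
qed simp

text \<open>Every set of a cover of {1..n} by small sets meets at most one part (a block or S),
  each block needs two of them, and S needs card S of them.\<close>
lemma card_cover_ge:
  assumes D: "D \<subseteq> small_sets" and cover: "{1..n} \<subseteq> \<Union>D"
  shows "2 * t + card S \<le> card D"
proof -
  define P where "P i = {Y \<in> D. Y \<inter> X i \<noteq> {}}" for i
  define PS where "PS = {Y \<in> D. Y \<inter> S \<noteq> {}}"
  have "finite D" using finite_subset[OF D finite_small_sets] .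
  then have finite_P: "finite (P i)" for i by (simp add: P_def)
  have "finite PS" using \<open>finite D\<close> by (simp add: PS_def)
  have disjoint_P: "P i \<inter> P j = {}" if "i \<in> {..<t}" "j \<in> {..<t}" "i \<noteq> j" for i j
    using that D small_set_meets_one_block unfolding P_def by blast
  have disjoint_PS: "(\<Union>i<t. P i) \<inter> PS = {}"
    using D small_set_meeting_block_disjoint_S unfolding P_def PS_def by blast
  have two_le_P: "2 \<le> card (P i)" if "i < t" for i
  proof -
    have "X i \<subseteq> \<Union>D" using block_subset[OF that] cover by (rule order_trans)
    then show ?thesis unfolding P_def by (rule two_le_card_cover_block[OF D _ that])
  qed
  have "card S \<le> card PS"
    unfolding PS_def using S_subset cover by (intro card_S_le_card_cover_S[OF D]) (rule order_trans)
  moreover have "(\<Sum>i<t. 2) \<le> (\<Sum>i<t. card (P i))"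
    using two_le_P by (intro sum_mono) simp
  ultimately have "2 * t + card S \<le> (\<Sum>i<t. card (P i)) + card PS" by simp
  also have "(\<Sum>i<t. card (P i)) = card (\<Union>i<t. P i)"
    using finite_P disjoint_P by (intro card_UN_disjoint[symmetric]) simp_all
  also have "card (\<Union>i<t. P i) + card PS = card ((\<Union>i<t. P i) \<union> PS)"
    using finite_P \<open>finite PS\<close> disjoint_PS by (intro card_Un_disjoint[symmetric]) simp_all
  also have "\<dots> \<le> card D"
    using \<open>finite D\<close> by (rule card_mono) (auto simp: P_def PS_def)
  finally show ?thesis .
qed

lemma kwise_intersecting_family:
  assumes "k < 2 * t + card S"
  shows "kwise_intersecting n k family"
  unfolding kwise_intersecting_def
proof (intro conjI allI impI)
  show "family \<subseteq> Pow {1..n}" by (auto simp: family_def)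
  fix G assume G: "G \<subseteq> family" "G \<noteq> {}" "card G \<le> k"
  then obtain D where D: "D \<subseteq> small_sets" and G_eq: "G = (\<lambda>Y. {1..n} - Y) ` D"
    unfolding family_def subset_image_iff by blast
  have "inj_on (\<lambda>Y. {1..n} - Y) D"
    using D small_sets_subset_Pow by (intro inj_onI) blast
  then have "card D \<le> k" using G(3) G_eq card_image by metis
  then have "\<not> {1..n} \<subseteq> \<Union>D" using card_cover_ge[OF D] assms by linarith
  moreover have "D \<noteq> {}" using G(2) G_eq by blast
  moreover have "\<Inter>G = {1..n} - \<Union>D" if "D \<noteq> {}" using that G_eq by auto
  ultimately show "\<Inter>G \<noteq> {}" by blast
qed

definition block_pieces :: "nat set \<Rightarrow> nat \<Rightarrow> nat set set" where
  "block_pieces Z i =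
     (if X i \<inter> Z = {} then {{SOME x. x \<in> X i}, X i - {SOME x. x \<in> X i}}
      else {X i - Z} - {{}})"

lemma block_pieces_subset_small_sets:
  assumes "i < t" shows "block_pieces Z i \<subseteq> small_sets"
proof (cases "X i \<inter> Z = {}")
  case True
  define a where "a = (SOME x. x \<in> X i)"
  have "2 \<le> card (X i)" by (rule two_le_card_block[OF assms])
  then have "X i \<noteq> {}" "X i \<noteq> {a}" by auto
  then have "a \<in> X i" unfolding a_def by (simp add: some_in_eq)
  with \<open>X i \<noteq> {a}\<close> have "{a} \<subset> X i" "X i - {a} \<subset> X i" by auto
  with assms True show ?thesis unfolding block_pieces_def small_sets_def a_def[symmetric] by auto
next
  case False
  then have "X i - Z \<subset> X i" by blast
  with assms False show ?thesis unfolding block_pieces_def small_sets_def by auto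
qed

lemma block_pieces_cover: "X i - Z \<subseteq> \<Union>(block_pieces Z i)"
  unfolding block_pieces_def by auto

lemma card_block_pieces_le_2: "card (block_pieces Z i) \<le> 2"
  unfolding block_pieces_def by (simp add: card_insert_le_m1 card_Diff_singleton_if)

lemma card_block_pieces_meeting:
  "X i \<inter> Z \<noteq> {} \<Longrightarrow> card (block_pieces Z i) \<le> 1"
  unfolding block_pieces_def by (simp add: card_Diff_singleton_if)

lemma block_pieces_eq_empty:
  "X i \<noteq> {} \<Longrightarrow> X i \<subseteq> Z \<Longrightarrow> block_pieces Z i = {}"
  unfolding block_pieces_def by auto

lemma S_subset_of_meeting:
  assumes "S \<inter> Z \<noteq> {}" shows "S \<subseteq> Z"
proof
  have single: "x = y" if "x \<in> S" "y \<in> S" for x y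
    using card_le_Suc0_iff_eq[OF finite_S] card_S_le_1 that by simp
  obtain s where "s \<in> S" "s \<in> Z" using assms by blast
  fix x assume "x \<in> S"
  with single[OF \<open>s \<in> S\<close>] \<open>s \<in> Z\<close> show "x \<in> Z" by simp
qed

lemma card_S_piece_le: "card ({S - Z} - {{}}) \<le> card S"
proof (cases "S - Z = {}")
  case False
  then have "card S \<ge> 1" using finite_S by (auto simp: Suc_le_eq card_gt_0_iff)
  then show ?thesis by (simp add: card_Diff_singleton_if)
qed simp

text \<open>Z is not a small set, so it meets some block. Compared with 2 t + card S, one piece
  is saved for each block that Z meets, one more for a block that it contains, and one if Z meets
  S; at least two savings occur.\<close>
lemma sum_card_block_pieces_le:
  assumes Z: "Z \<subseteq> {1..n}" "Z \<notin> small_sets"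
  shows "(\<Sum>i<t. card (block_pieces Z i)) + card ({S - Z} - {{}}) + 2 \<le> 2 * t + card S"
proof -
  let ?b = "\<lambda>i. card (block_pieces Z i)"
  have b_le: "?b i \<le> 2" for i by (rule card_block_pieces_le_2)
  have "\<not> Z \<subseteq> S"
  proof
    assume "Z \<subseteq> S"
    then have "Z \<in> small_sets" by (simp add: small_sets_def)
    with Z(2) show False by contradiction
  qed
  then obtain z where "z \<in> Z" "z \<notin> S" by blast
  then obtain i0 where i0: "i0 < t" "z \<in> X i0" using Z(1) covers by blast
  then have "X i0 \<inter> Z \<noteq> {}" using \<open>z \<in> Z\<close> by blast
  consider (two) i1 where "i1 < t" "i1 \<noteq> i0" "X i1 \<inter> Z \<noteq> {}"
    | (S) "S \<inter> Z \<noteq> {}"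
    | (one) "\<forall>i<t. i \<noteq> i0 \<longrightarrow> X i \<inter> Z = {}" "S \<inter> Z = {}"
    by (metis (full_types))
  then show ?thesis
  proof cases
    case two
    have "(\<Sum>i<t. ?b i) \<le> (\<Sum>i\<in>{i0, i1}. ?b i) + 2 * (card {..<t} - card {i0, i1})"
      by (rule sum_le_sum_subset_plus_bound) (use i0(1) two(1) b_le in auto)
    also have "\<dots> \<le> 2 + 2 * (t - 2)"
      using two card_block_pieces_meeting[OF \<open>X i0 \<inter> Z \<noteq> {}\<close>]
        card_block_pieces_meeting[OF two(3)] by simp
    finally show ?thesis using card_S_piece_le[of Z] two(1,2) i0(1) by linarith
  next
    case S
    then have "S \<subseteq> Z" by (rule S_subset_of_meeting)
    have "S \<noteq> {}" using S by blast
    then have "card S \<ge> 1" using finite_S by (simp add: Suc_le_eq card_gt_0_iff)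
    then have "card S = 1" using card_S_le_1 by linarith
    from \<open>S \<subseteq> Z\<close> have "card ({S - Z} - {{}}) = 0" by simp
    have "(\<Sum>i<t. ?b i) \<le> (\<Sum>i\<in>{i0}. ?b i) + 2 * (card {..<t} - card {i0})"
      by (rule sum_le_sum_subset_plus_bound) (use i0(1) b_le in auto)
    also have "\<dots> \<le> 1 + 2 * (t - 1)"
      using card_block_pieces_meeting[OF \<open>X i0 \<inter> Z \<noteq> {}\<close>] by simp
    finally show ?thesis
      using \<open>card ({S - Z} - {{}}) = 0\<close> \<open>card S = 1\<close> i0(1) by linarith
  next
    case one
    have "Z \<subseteq> X i0"
    proof
      fix x assume "x \<in> Z"
      then obtain i where "i < t" "x \<in> X i" using one(2) Z(1) covers by blast
      with \<open>x \<in> Z\<close> one(1) show "x \<in> X i0" by blast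
    qed
    moreover have "\<not> Z \<subset> X i0" using Z(2) i0(1) by (auto simp: small_sets_def)
    ultimately have "X i0 \<subseteq> Z" by blast
    moreover have "X i0 \<noteq> {}" using i0(2) by blast
    ultimately have "?b i0 = 0" by (simp add: block_pieces_eq_empty)
    have "(\<Sum>i<t. ?b i) \<le> (\<Sum>i\<in>{i0}. ?b i) + 2 * (card {..<t} - card {i0})"
      by (rule sum_le_sum_subset_plus_bound) (use i0(1) b_le in auto)
    then have "(\<Sum>i<t. ?b i) \<le> 2 * (t - 1)" using \<open>?b i0 = 0\<close> by simp
    then show ?thesis using card_S_piece_le[of Z] i0(1) by linarith
  qed
qed

lemma small_cover_of_complement:
  assumes "Z \<subseteq> {1..n}" "Z \<notin> small_sets"
  obtains C where "C \<subseteq> small_sets" "card C + 2 \<le> 2 * t + card S" "{1..n} - Z \<subseteq> \<Union>C"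
proof
  let ?C = "(\<Union>i<t. block_pieces Z i) \<union> ({S - Z} - {{}})"
  have "(\<Union>i<t. block_pieces Z i) \<subseteq> small_sets"
    using block_pieces_subset_small_sets by blast
  moreover have "{S - Z} - {{}} \<subseteq> small_sets" by (auto simp: small_sets_def)
  ultimately show "?C \<subseteq> small_sets" by (rule Un_least)
  have "card ?C \<le> card (\<Union>i<t. block_pieces Z i) + card ({S - Z} - {{}})"
    by (rule card_Un_le)
  also have "card (\<Union>i<t. block_pieces Z i) \<le> (\<Sum>i<t. card (block_pieces Z i))"
    by (rule card_UN_le) simp
  finally show "card ?C + 2 \<le> 2 * t + card S"
    using sum_card_block_pieces_le[OF assms] by linarith
  show "{1..n} - Z \<subseteq> \<Union>?C"
  proof
    fix x assume x: "x \<in> {1..n} - Z"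
    then have "x \<in> S \<union> (\<Union>i<t. X i)" using covers by blast
    then show "x \<in> \<Union>?C"
    proof
      assume "x \<in> S"
      with x have "x \<in> S - Z" "S - Z \<in> ?C" by auto
      then show ?thesis by (rule UnionI[rotated])
    next
      assume "x \<in> (\<Union>i<t. X i)"
      then obtain i where "i < t" "x \<in> X i" by blast
      with x block_pieces_cover[of i Z] obtain P where "P \<in> block_pieces Z i" "x \<in> P"
        by blast
      with \<open>i < t\<close> have "P \<in> ?C" "x \<in> P" by auto
      then show ?thesis by (rule UnionI)
    qed
  qed
qed

lemma maximal_kwise_intersecting_family:
  assumes k: "k + 1 = 2 * t + card S"
  shows "maximal_kwise_intersecting n k family"
  unfolding maximal_kwise_intersecting_def
proof (intro conjI allI impI)
  show "kwise_intersecting n k family"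
    using k by (intro kwise_intersecting_family) simp
  fix A assume A: "A \<subseteq> {1..n}" "A \<notin> family"
  define Z where "Z = {1..n} - A"
  have "A = {1..n} - Z" using A(1) by (auto simp: Z_def)
  then have "Z \<notin> small_sets" using A(2) by (auto simp: family_def)
  moreover have "Z \<subseteq> {1..n}" by (simp add: Z_def)
  ultimately obtain C where C: "C \<subseteq> small_sets" "card C + 2 \<le> 2 * t + card S"
    and cover: "A \<subseteq> \<Union>C"
    using small_cover_of_complement \<open>A = {1..n} - Z\<close> by metis
  define G where "G = insert A ((\<lambda>Y. {1..n} - Y) ` C)"
  have "G \<subseteq> insert A family" using C(1) by (auto simp: G_def family_def)
  moreover have "G \<noteq> {}" by (simp add: G_def)
  moreover have "card G \<le> k"
  proof -
    have "finite C" using finite_subset[OF C(1) finite_small_sets] .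
    then have "card G \<le> Suc (card ((\<lambda>Y. {1..n} - Y) ` C))"
      unfolding G_def by (simp add: card_insert_if)
    also have "\<dots> \<le> Suc (card C)" using card_image_le[OF \<open>finite C\<close>] by simp
    finally show ?thesis using C(2) k by linarith
  qed
  moreover have "\<Inter>G = {}" using cover by (auto simp: G_def)
  ultimately show "\<not> kwise_intersecting n k (insert A family)"
    using kwise_intersectingD by blast
qed

lemma card_family_le:
  assumes "\<And>i. i < t \<Longrightarrow> card (X i) \<le> b"
  shows "card family \<le> t * 2 ^ b + 2"
proof -
  have "small_sets \<subseteq> (\<Union>i<t. Pow (X i)) \<union> Pow S" by (auto simp: small_sets_def)
  then have "card small_sets \<le> card ((\<Union>i<t. Pow (X i)) \<union> Pow S)"
    using finite_block finite_S by (intro card_mono) auto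
  also have "\<dots> \<le> card (\<Union>i<t. Pow (X i)) + card (Pow S)" by (rule card_Un_le)
  also have "card (\<Union>i<t. Pow (X i)) \<le> (\<Sum>i<t. card (Pow (X i)))" by (rule card_UN_le) simp
  also have "\<dots> \<le> (\<Sum>i<t. 2 ^ b)"
  proof (rule sum_mono)
    fix i assume "i \<in> {..<t}"
    then show "card (Pow (X i)) \<le> 2 ^ b"
      using assms finite_block by (simp add: card_Pow power_increasing)
  qed
  also have "card (Pow S) \<le> 2"
    using finite_S card_S_le_1 by (simp add: card_Pow power_increasing[of _ 1, simplified])
  finally have "card small_sets \<le> t * 2 ^ b + 2" by simp
  moreover have "card family \<le> card small_sets"
    unfolding family_def by (rule card_image_le[OF finite_small_sets])
  ultimately show ?thesis by linarith
qed

end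

lemma card_residue_class_le: "card {x \<in> {1..N}. (x - 1) mod t = i} \<le> N div t + 1"
proof -
  have "{x \<in> {1..N}. (x - 1) mod t = i} \<subseteq> (\<lambda>q. q * t + i + 1) ` {..N div t}"
  proof
    fix x assume x: "x \<in> {x \<in> {1..N}. (x - 1) mod t = i}"
    then have "x = (x - 1) div t * t + i + 1" using div_mult_mod_eq[of "x - 1" t] by simp
    moreover have "x - 1 \<le> N" using x by auto
    then have "(x - 1) div t \<le> N div t" by (rule div_le_mono)
    ultimately show "x \<in> (\<lambda>q. q * t + i + 1) ` {..N div t}" by (intro image_eqI) simp_all
  qed
  then have "card {x \<in> {1..N}. (x - 1) mod t = i} \<le> card ((\<lambda>q. q * t + i + 1) ` {..N div t})"
    by (rule card_mono[rotated]) simp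
  also have "\<dots> \<le> N div t + 1" using card_image_le[of "{..N div t}"] by simp
  finally show ?thesis .
qed

lemma block_partition_residues:
  assumes "1 \<le> t" "2 * t \<le> N" "N \<le> n" "n \<le> N + 1"
  shows "block_partition n t (\<lambda>i. {x \<in> {1..N}. (x - 1) mod t = i}) {N<..n}"
proof
  fix i assume "i < t"
  have "{i + 1, i + 1 + t} \<subseteq> {x \<in> {1..N}. (x - 1) mod t = i}"
    using \<open>i < t\<close> assms(2) by auto
  then have "card {i + 1, i + 1 + t} \<le> card {x \<in> {1..N}. (x - 1) mod t = i}"
    by (rule card_mono[rotated]) simp
  then show "2 \<le> card {x \<in> {1..N}. (x - 1) mod t = i}"
    using \<open>1 \<le> t\<close> by simp
next
  show "{1..n} \<subseteq> {N<..n} \<union> (\<Union>i<t. {x \<in> {1..N}. (x - 1) mod t = i})"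
    using \<open>1 \<le> t\<close> by auto
qed (use assms in auto)

section \<open>The upper bound\<close>

lemma f_le_residue_construction:
  assumes "1 \<le> k" "k + 1 \<le> n"
  defines "t \<equiv> (k + 1) div 2"
  shows "f n k \<le> t * 2 ^ (n div t + 1) + 2"
proof -
  \<comment> \<open>for even k the point n alone forms S\<close>
  define N where "N = n - (k + 1) mod 2"
  have k_eq: "k + 1 = 2 * t + (k + 1) mod 2" by (simp add: t_def)
  have "1 \<le> t" using assms(1) by (simp add: t_def)
  interpret block_partition n t "\<lambda>i. {x \<in> {1..N}. (x - 1) mod t = i}" "{N<..n}"
    by (rule block_partition_residues) (use \<open>1 \<le> t\<close> assms(2) k_eq in \<open>simp_all add: N_def\<close>)
  have "card {N<..n} = (k + 1) mod 2" using assms(2) k_eq by (simp add: N_def)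
  then have "maximal_kwise_intersecting n k family"
    using k_eq by (intro maximal_kwise_intersecting_family) simp
  then have "f n k \<le> card family" by (rule f_le_card)
  also have "\<dots> \<le> t * 2 ^ (N div t + 1) + 2"
    by (rule card_family_le) (rule card_residue_class_le)
  also have "\<dots> \<le> t * 2 ^ (n div t + 1) + 2"
    by (simp add: N_def div_le_mono)
  finally show ?thesis .
qed

lemma f_upper_bound:
  assumes "k \<ge> 2" "n \<ge> 1"
  defines "t \<equiv> (k + 1) div 2"
  shows "real (f n k) \<le> (2 * real t + 2 + 2 ^ k) * 2 powr (real n / real t)"
proof (cases "k + 1 \<le> n")
  case True
  let ?m = "n div t"
  have "f n k \<le> t * 2 ^ (?m + 1) + 2"
    using f_le_residue_construction[of k n] assms(1) True by (simp add: t_def)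
  then have "real (f n k) \<le> real (t * 2 ^ (?m + 1) + 2)" by (simp only: of_nat_le_iff)
  also have "\<dots> = 2 * real t * 2 ^ ?m + 2" by simp
  also have "\<dots> \<le> 2 * real t * 2 ^ ?m + 2 * 2 ^ ?m"
    using one_le_power[of "2::real" ?m] by simp
  also have "\<dots> = (2 * real t + 2) * 2 ^ ?m" by (simp only: distrib_right)
  also have "(2::real) ^ ?m \<le> 2 powr (real n / real t)"
  proof -
    have "real ?m \<le> real n / real t" by (rule of_nat_div_le_of_nat)
    then have "(2::real) powr real ?m \<le> 2 powr (real n / real t)" by (rule powr_mono) simp
    then show ?thesis by (simp add: powr_realpow)
  qed
  then have "(2 * real t + 2) * 2 ^ ?m \<le> (2 * real t + 2) * 2 powr (real n / real t)"
    by (intro mult_left_mono) simp_all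
  also have "\<dots> \<le> (2 * real t + 2 + 2 ^ k) * 2 powr (real n / real t)"
    by (intro mult_right_mono) simp_all
  finally show ?thesis .
next
  case False
  have "(2::nat) ^ n \<le> 2 ^ k" by (rule power_increasing) (use False in simp_all)
  with f_le_two_power[OF assms(2,1)] have "f n k \<le> 2 ^ k" by (rule order_trans)
  then have "real (f n k) \<le> real (2 ^ k)" by (simp only: of_nat_le_iff)
  also have "\<dots> = 2 ^ k" by simp
  also have "\<dots> \<le> (2 * real t + 2 + 2 ^ k) * 1" by simp
  also have "\<dots> \<le> (2 * real t + 2 + 2 ^ k) * 2 powr (real n / real t)"
    by (intro mult_left_mono ge_one_powr_ge_zero) simp_all
  finally show ?thesis .
qed

lemma ceiling_half_eq: "real_of_int \<lceil>real k / 2\<rceil> = real ((k + 1) div 2)"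
proof -
  have "\<lceil>real k / 2\<rceil> = - (- int k div 2)"
    using ceiling_divide_eq_div[of "int k" 2] by simp
  also have "\<dots> = int ((k + 1) div 2)" by presburger
  finally show ?thesis by simp
qed

theorem proposition4p1:
  fixes k :: nat
  assumes "k \<ge> 4"
  shows "\<exists>c d :: real. c > 0 \<and> d > 0 \<and>
           (\<forall>n::nat. n \<ge> 1 \<longrightarrow>
              c * 2 powr (real n / (real k - 1)) \<le> real (f n k) \<and>
              real (f n k) \<le> d * 2 powr (real n / real_of_int \<lceil>real k / 2\<rceil>))"
proof (intro exI conjI allI impI)
  let ?t = "(k + 1) div 2"
  show "(1/2::real) > 0" by simp
  show "2 * real ?t + 2 + 2 ^ k > 0" by (simp add: add_pos_pos)
  fix n :: nat assume "n \<ge> 1"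
  show "1/2 * 2 powr (real n / (real k - 1)) \<le> real (f n k)"
    using f_lower_bound[OF \<open>n \<ge> 1\<close>] assms by simp
  show "real (f n k) \<le> (2 * real ?t + 2 + 2 ^ k) * 2 powr (real n / real_of_int \<lceil>real k / 2\<rceil>)"
    unfolding ceiling_half_eq using f_upper_bound[OF _ \<open>n \<ge> 1\<close>] assms by simp
qed

end
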